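(* Let $G=(V,E)$ be a simple graph and let $a,b$ be positive integers. Let $V_D'\subseteq V$ be such that every $v\in V_D'$ satisfies $$|E(N^a(v))|\ge|E(N^{100ab}(v))|/(2b).$$ Let $W_0=\{u\in V:\operatorname{dist}(u,V_D')\le a\}$. Then the vertex set $S$ of every connected component of $G[W_0]$ satisfies the invariant $\mathcal H$.
   Context: $\operatorname{dist}$ is the shortest-path distance in $G$; $\operatorname{dist}(u,X)=\min_{x\in X}\operatorname{dist}(u,x)$; $N^r(v)=\{u:\operatorname{dist}(u,v)\le r\}$; $E(X)$ is the set of edges with both endpoints in $X$. For a vertex set $X$ (with $V_D'$ and $a$ fixed): - $N_X$ is the maximum size of a subset $X^*\subseteq X\cap V_D'$ such that $\operatorname{dist}(u,v)>2a$ for every pair of distinct $u,v\in X^*$; - $D_X$ is the diameter of the induced subgraph $G[X]$ (equal to $\infty$ if $G[X]$ is disconnected). A vertex set $S$ satisfies invariant $\mathcal H$ if all three of the following hold: 1. for each $u\in V_D'$, either $N^a(u)\subseteq S$ or $N^a(u)\cap S=\emptyset$; 2. $D_S\le 10a\cdot N_S-(4a+1)$; 3. $N_S\le 2b$. *)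

theory Defs
  imports Main "HOL-Library.Extended_Nat"
begin

definition simple_graph :: "'a set \<Rightarrow> ('a \<Rightarrow> 'a \<Rightarrow> bool) \<Rightarrow> bool" where
  "simple_graph V Adj \<longleftrightarrow> finite V \<and> (\<forall>u v. Adj u v \<longrightarrow> u \<in> V \<and> v \<in> V)
     \<and> (\<forall>u v. Adj u v \<longrightarrow> Adj v u) \<and> (\<forall>u. \<not> Adj u u)"

definition walk_in :: "('a \<Rightarrow> 'a \<Rightarrow> bool) \<Rightarrow> 'a set \<Rightarrow> 'a list \<Rightarrow> bool" where
  "walk_in Adj X xs \<longleftrightarrow> xs \<noteq> [] \<and> set xs \<subseteq> X \<and>
     (\<forall>i. Suc i < length xs \<longrightarrow> Adj (xs ! i) (xs ! Suc i))"

text \<open>shortest-path distance in the induced subgraph G[X] (infinity if unreachable)\<close>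
definition dist_in :: "('a \<Rightarrow> 'a \<Rightarrow> bool) \<Rightarrow> 'a set \<Rightarrow> 'a \<Rightarrow> 'a \<Rightarrow> enat" where
  "dist_in Adj X u v = Inf {enat (length xs - 1) | xs. walk_in Adj X xs \<and> hd xs = u \<and> last xs = v}"

definition gdist :: "'a set \<Rightarrow> ('a \<Rightarrow> 'a \<Rightarrow> bool) \<Rightarrow> 'a \<Rightarrow> 'a \<Rightarrow> enat" where
  "gdist V Adj u v = dist_in Adj V u v"

definition gdist_set :: "'a set \<Rightarrow> ('a \<Rightarrow> 'a \<Rightarrow> bool) \<Rightarrow> 'a \<Rightarrow> 'a set \<Rightarrow> enat" where
  "gdist_set V Adj u X = (INF x\<in>X. gdist V Adj u x)"

definition ball_r :: "'a set \<Rightarrow> ('a \<Rightarrow> 'a \<Rightarrow> bool) \<Rightarrow> nat \<Rightarrow> 'a \<Rightarrow> 'a set" where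
  "ball_r V Adj r v = {u \<in> V. gdist V Adj u v \<le> enat r}"

definition edges_in :: "('a \<Rightarrow> 'a \<Rightarrow> bool) \<Rightarrow> 'a set \<Rightarrow> 'a set set" where
  "edges_in Adj X = {{u, v} | u v. u \<in> X \<and> v \<in> X \<and> Adj u v}"

definition NX :: "'a set \<Rightarrow> ('a \<Rightarrow> 'a \<Rightarrow> bool) \<Rightarrow> 'a set \<Rightarrow> nat \<Rightarrow> 'a set \<Rightarrow> nat" where
  "NX V Adj VD a X = Max {card Y | Y. Y \<subseteq> X \<inter> VD \<and>
      (\<forall>u\<in>Y. \<forall>v\<in>Y. u \<noteq> v \<longrightarrow> gdist V Adj u v > enat (2 * a))}"

text \<open>D_X: diameter of G[X] (infinity if disconnected)\<close>
definition DX :: "('a \<Rightarrow> 'a \<Rightarrow> bool) \<Rightarrow> 'a set \<Rightarrow> enat" where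
  "DX Adj X = (SUP p\<in>X \<times> X. dist_in Adj X (fst p) (snd p))"

definition inv_H :: "'a set \<Rightarrow> ('a \<Rightarrow> 'a \<Rightarrow> bool) \<Rightarrow> 'a set \<Rightarrow> nat \<Rightarrow> nat \<Rightarrow> 'a set \<Rightarrow> bool" where
  "inv_H V Adj VD a b S \<longleftrightarrow>
     (\<forall>u\<in>VD. ball_r V Adj a u \<subseteq> S \<or> ball_r V Adj a u \<inter> S = {}) \<and>
     (\<exists>d. DX Adj S = enat d \<and> int d \<le> 10 * int a * int (NX V Adj VD a S) - (4 * int a + 1)) \<and>
     NX V Adj VD a S \<le> 2 * b"

definition components_in :: "('a \<Rightarrow> 'a \<Rightarrow> bool) \<Rightarrow> 'a set \<Rightarrow> 'a set set" where
  "components_in Adj X = {{y \<in> X. dist_in Adj X x y < \<infinity>} | x. x \<in> X}"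

end

theory Submission
  imports Defs
begin

text \<open>
  Every vertex of \<open>W\<^sub>0\<close> is within \<open>a\<close> of \<open>V\<^sub>D'\<close>, and a walk of length at most \<open>a\<close>
  leaving a vertex of \<open>V\<^sub>D'\<close> never leaves \<open>W\<^sub>0\<close>. This gives the closure property of
  the balls \<open>N\<^sup>a(u)\<close>, and it turns any walk inside a component \<open>S\<close> into a walk through
  \<open>V\<^sub>D' \<inter> S\<close> whose consecutive vertices are at distance at most \<open>2a+1\<close>. In a shortest such
  walk, vertices two steps apart are more than \<open>2a+1\<close> apart, so the vertices at even
  positions form a \<open>2a\<close>-separated set; hence the walk has at most \<open>2N\<^sub>S\<close> vertices,
  which bounds the diameter.

  For \<open>N\<^sub>S \<le> 2b\<close>, let \<open>v \<in> V\<^sub>D' \<inter> S\<close> minimise \<open>|E(N\<^sup>a(\<cdot>))|\<close> and take a maximum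
  \<open>2a\<close>-separated set \<open>Y'\<close> of vertices of \<open>V\<^sub>D' \<inter> S\<close> within \<open>R = 100ab - a\<close> of \<open>v\<close>.
  The \<open>a\<close>-balls around \<open>Y'\<close> are disjoint and lie in \<open>N\<^bsup>100ab\<^esup>(v)\<close>, so the density
  condition at \<open>v\<close> gives \<open>|Y'| \<le> 2b\<close>. If \<open>N\<^sub>S > 2b\<close>, some vertex of \<open>S\<close> is farther
  than \<open>R\<close> from \<open>v\<close>; every distance from \<open>v\<close> up to \<open>R - a\<close> is then attained in \<open>S\<close>,
  and each lies within \<open>3a\<close> of the distance of a point of the dominating set \<open>Y'\<close>,
  which is impossible with only \<open>2b\<close> intervals of length \<open>6a+1\<close>.
\<close>

lemma Inf_enat_le_iff: "Inf M \<le> enat n \<longleftrightarrow> (\<exists>m\<in>M. m \<le> enat n)" for M :: "enat set"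
proof
  assume le: "Inf M \<le> enat n"
  then have "M \<noteq> {}" by (auto simp: Inf_enat_def)
  then have "Inf M \<in> M" unfolding Inf_enat_def by (auto intro: LeastI)
  with le show "\<exists>m\<in>M. m \<le> enat n" by blast
qed (auto intro: Inf_lower2)

lemma less_infinity_iff_le_enat: "x < \<infinity> \<longleftrightarrow> (\<exists>n. x \<le> enat n)" for x :: enat
  by (cases x) auto

lemma le_enat_trans: "x \<le> enat n \<Longrightarrow> n \<le> m \<Longrightarrow> x \<le> enat m" for x :: enat
  by (erule order_trans) simp

lemma walk_in_iff_successively:
  "walk_in A X xs \<longleftrightarrow> xs \<noteq> [] \<and> set xs \<subseteq> X \<and> successively A xs"
  unfolding walk_in_def successively_conv_nth by blast

lemma dist_in_le_enat_iff:
  "dist_in A X u v \<le> enat n \<longleftrightarrow>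
     (\<exists>xs. walk_in A X xs \<and> hd xs = u \<and> last xs = v \<and> length xs \<le> Suc n)"
  unfolding dist_in_def Inf_enat_le_iff by auto

lemma walk_in_append_tl:
  assumes "walk_in A X xs" "walk_in A X ys" "last xs = hd ys"
  shows "walk_in A X (xs @ tl ys)" "hd (xs @ tl ys) = hd xs" "last (xs @ tl ys) = last ys"
    and "length (xs @ tl ys) = length xs + length ys - 1"
proof -
  have ys: "ys = hd ys # tl ys" and xs: "xs \<noteq> []"
    using assms(1,2) by (auto simp: walk_in_def)
  have "successively A (hd ys # tl ys)" "set (hd ys # tl ys) \<subseteq> X"
    using assms(2) ys by (metis walk_in_iff_successively)+
  then show "walk_in A X (xs @ tl ys)"
    using assms(1,3) unfolding walk_in_iff_successively
    by (auto simp: successively_append_iff successively_Cons)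
  show "hd (xs @ tl ys) = hd xs" using xs by simp
  show "last (xs @ tl ys) = last ys" using assms(3) ys by (metis last_ConsL last_ConsR last_append)
  show "length (xs @ tl ys) = length xs + length ys - 1" using ys by (cases ys) auto
qed

lemma dist_in_triangle:
  assumes "dist_in A X u v \<le> enat n" "dist_in A X v w \<le> enat m"
  shows "dist_in A X u w \<le> enat (n + m)"
proof -
  obtain xs where xs: "walk_in A X xs" "hd xs = u" "last xs = v" "length xs \<le> Suc n"
    using assms(1) dist_in_le_enat_iff by metis
  obtain ys where ys: "walk_in A X ys" "hd ys = v" "last ys = w" "length ys \<le> Suc m"
    using assms(2) dist_in_le_enat_iff by metis
  show ?thesis unfolding dist_in_le_enat_iff
    using walk_in_append_tl[OF xs(1) ys(1)] xs ys by (intro exI[of _ "xs @ tl ys"]) auto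
qed

lemma dist_in_sym:
  assumes "\<And>x y. A x y \<Longrightarrow> A y x" "dist_in A X u v \<le> enat n"
  shows "dist_in A X v u \<le> enat n"
proof -
  obtain xs where xs: "walk_in A X xs" "hd xs = u" "last xs = v" "length xs \<le> Suc n"
    using assms(2) dist_in_le_enat_iff by metis
  have "walk_in A X (rev xs)"
    using xs(1) assms(1) unfolding walk_in_iff_successively
    by (auto intro: successively_mono)
  then show ?thesis unfolding dist_in_le_enat_iff using xs
    by (intro exI[of _ "rev xs"]) (auto simp: hd_rev last_rev)
qed

lemma dist_in_refl: "u \<in> X \<Longrightarrow> dist_in A X u u \<le> enat 0"
  unfolding dist_in_le_enat_iff walk_in_def by (intro exI[of _ "[u]"]) auto

lemma dist_in_adj: "u \<in> X \<Longrightarrow> v \<in> X \<Longrightarrow> A u v \<Longrightarrow> dist_in A X u v \<le> enat 1"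
  unfolding dist_in_le_enat_iff walk_in_iff_successively by (intro exI[of _ "[u, v]"]) auto

lemma dist_in_mono_set: "X \<subseteq> Y \<Longrightarrow> dist_in A X u v \<le> enat n \<Longrightarrow> dist_in A Y u v \<le> enat n"
  unfolding dist_in_le_enat_iff walk_in_def by blast

lemma dist_in_memD: "dist_in A X u v \<le> enat n \<Longrightarrow> u \<in> X \<and> v \<in> X"
  unfolding dist_in_le_enat_iff walk_in_def by (metis hd_in_set last_in_set subsetD)

lemma walk_in_dist_from_hd:
  assumes "walk_in A X xs" "i < length xs"
  shows "dist_in A X (hd xs) (xs ! i) \<le> enat i"
  unfolding dist_in_le_enat_iff
proof (intro exI[of _ "take (Suc i) xs"] conjI)
  show "walk_in A X (take (Suc i) xs)"
    using assms unfolding walk_in_def by (auto dest: in_set_takeD)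
  show "last (take (Suc i) xs) = xs ! i"
    using assms by (simp add: take_Suc_conv_app_nth)
qed (use assms in \<open>auto simp: walk_in_def hd_conv_nth\<close>)

lemma walk_in_dist_to_last:
  assumes "walk_in A X xs" "i < length xs"
  shows "dist_in A X (xs ! i) (last xs) \<le> enat (length xs - 1 - i)"
  unfolding dist_in_le_enat_iff
proof (intro exI[of _ "drop i xs"] conjI)
  show "walk_in A X (drop i xs)"
    using assms unfolding walk_in_def by (auto dest: in_set_dropD)
qed (use assms in \<open>auto simp: walk_in_def hd_drop_conv_nth\<close>)

lemma component_subset: "S \<in> components_in A X \<Longrightarrow> S \<subseteq> X"
  unfolding components_in_def by auto

lemma component_nonempty: "S \<in> components_in A X \<Longrightarrow> S \<noteq> {}"
  unfolding components_in_def less_infinity_iff_le_enat by (blast dest: dist_in_refl)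

lemma component_closed:
  assumes "S \<in> components_in A X" "y \<in> S" "dist_in A X y z \<le> enat n"
  shows "z \<in> S"
proof -
  obtain x where S: "S = {y \<in> X. dist_in A X x y < \<infinity>}"
    using assms(1) unfolding components_in_def by blast
  obtain m where "dist_in A X x y \<le> enat m"
    using assms(2) unfolding S less_infinity_iff_le_enat by blast
  then have "dist_in A X x z \<le> enat (m + n)" using assms(3) by (rule dist_in_triangle)
  then show ?thesis using dist_in_memD[OF assms(3)] unfolding S less_infinity_iff_le_enat by blast
qed

lemma component_dist_in:
  assumes "S \<in> components_in A X" "y \<in> S" "dist_in A X y z \<le> enat n"
  shows "dist_in A S y z \<le> enat n"
proof -
  obtain xs where xs: "walk_in A X xs" "hd xs = y" "last xs = z" "length xs \<le> Suc n"
    using assms(3) dist_in_le_enat_iff by metis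
  have "set xs \<subseteq> S"
  proof
    fix x assume "x \<in> set xs"
    then obtain i where "i < length xs" "x = xs ! i" by (metis in_set_conv_nth)
    then show "x \<in> S"
      using walk_in_dist_from_hd[OF xs(1)] xs(2) component_closed[OF assms(1,2)] by metis
  qed
  then have "walk_in A S xs" using xs(1) unfolding walk_in_def by auto
  then show ?thesis unfolding dist_in_le_enat_iff using xs by blast
qed

lemma component_connected:
  assumes "\<And>x y. A x y \<Longrightarrow> A y x" "S \<in> components_in A X" "y \<in> S" "z \<in> S"
  shows "\<exists>n. dist_in A S y z \<le> enat n"
proof -
  obtain x where S: "S = {y \<in> X. dist_in A X x y < \<infinity>}"
    using assms(2) unfolding components_in_def by blast
  obtain n m where "dist_in A X x y \<le> enat n" "dist_in A X x z \<le> enat m"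
    using assms(3,4) unfolding S less_infinity_iff_le_enat by blast
  then have "dist_in A X y z \<le> enat (n + m)"
    using dist_in_triangle[OF dist_in_sym[of A, OF assms(1)]] by blast
  then show ?thesis using component_dist_in[OF assms(2,3)] by blast
qed

lemma successively_le_Suc_ivt:
  fixes f :: "'b \<Rightarrow> nat"
  assumes "xs \<noteq> []" "successively (\<lambda>x y. f y \<le> f x + 1) xs"
    and "f (hd xs) \<le> d" "d \<le> f (last xs)"
  shows "\<exists>x\<in>set xs. f x = d"
  using assms
proof (induction xs)
  case (Cons x ys)
  show ?case
  proof (cases "ys = [] \<or> f x = d")
    case False
    then have "successively (\<lambda>x y. f y \<le> f x + 1) ys" "f (hd ys) \<le> d" "d \<le> f (last ys)"
      using Cons.prems by (auto simp: successively_Cons)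
    then show ?thesis using Cons.IH False by auto
  qed (use Cons.prems in auto)
qed simp

lemma card_le_of_interval_cover:
  fixes f :: "'b \<Rightarrow> nat"
  assumes "finite Y" "{0..D} \<subseteq> (\<Union>y\<in>Y. {f y - r .. f y + r})"
  shows "D + 1 \<le> card Y * (2 * r + 1)"
proof -
  have "D + 1 = card {0..D}" by simp
  also have "\<dots> \<le> card (\<Union>y\<in>Y. {f y - r .. f y + r})"
    using assms by (intro card_mono) auto
  also have "\<dots> \<le> (\<Sum>y\<in>Y. card {f y - r .. f y + r})" using card_UN_le[OF assms(1)] .
  also have "\<dots> \<le> (\<Sum>y\<in>Y. 2 * r + 1)" by (intro sum_mono) simp
  finally show ?thesis by simp
qed

lemma walk_in_shortcut:
  assumes "walk_in P T us" "i < j" "j < length us" "P (us ! i) (us ! j)"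
  shows "walk_in P T (take (Suc i) us @ drop j us)"
proof -
  have "successively P us" "set us \<subseteq> T" using assms(1) unfolding walk_in_iff_successively by auto
  then have "successively P (take (Suc i) us)" "successively P (drop j us)"
    by (metis append_take_drop_id successively_append_iff)+
  moreover have "last (take (Suc i) us) = us ! i" "hd (drop j us) = us ! j"
    using assms(2,3) by (simp_all add: take_Suc_conv_app_nth hd_drop_conv_nth)
  moreover have "set (take (Suc i) us @ drop j us) \<subseteq> T"
    using \<open>set us \<subseteq> T\<close> set_take_subset set_drop_subset by fastforce
  moreover have "take (Suc i) us \<noteq> []" "drop j us \<noteq> []" using assms(2,3) by auto
  ultimately show ?thesis using assms(4) unfolding walk_in_iff_successively
    by (simp add: successively_append_iff)
qed

lemma shortest_walk_no_shortcut:
  assumes "walk_in P T us"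
    and shortest: "\<And>vs. walk_in P T vs \<Longrightarrow> hd vs = hd us \<Longrightarrow> last vs = last us \<Longrightarrow> length us \<le> length vs"
    and "Suc i < j" "j < length us"
  shows "\<not> P (us ! i) (us ! j)"
proof
  let ?vs = "take (Suc i) us @ drop j us"
  assume "P (us ! i) (us ! j)"
  then have "walk_in P T ?vs" using walk_in_shortcut[OF assms(1)] assms(3,4) by simp
  moreover have "hd ?vs = hd us" "last ?vs = last us" using assms(3,4) by (cases us; auto)+
  ultimately have "length us \<le> length ?vs" by (rule shortest)
  then show False using assms(3,4) by simp
qed

lemma walk_in_dist_le_hops:
  assumes "walk_in P T us" "T \<subseteq> X"
    and hop: "\<And>x y. x \<in> T \<Longrightarrow> y \<in> T \<Longrightarrow> P x y \<Longrightarrow> dist_in A X x y \<le> enat c"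
  shows "dist_in A X (hd us) (last us) \<le> enat ((length us - 1) * c)"
  using assms(1)
proof (induction us)
  case (Cons u us)
  show ?case
  proof (cases "us = []")
    case True
    then show ?thesis using Cons.prems assms(2) dist_in_refl[of u X A] by (auto simp: walk_in_def)
  next
    case False
    then have us: "walk_in P T us" and "P u (hd us)" "u \<in> T" "hd us \<in> T"
      using Cons.prems unfolding walk_in_iff_successively by (auto simp: successively_Cons)
    then have "dist_in A X u (hd us) \<le> enat c" by (intro hop)
    from dist_in_triangle[OF this Cons.IH[OF us]]
    have "dist_in A X u (last us) \<le> enat (c + (length us - 1) * c)" .
    moreover have "c + (length us - 1) * c = (length (u # us) - 1) * c"
      using False by (cases us) auto
    ultimately show ?thesis using False by simp
  qed
qed (simp add: walk_in_def)

lemma edges_in_mono: "X \<subseteq> Y \<Longrightarrow> edges_in A X \<subseteq> edges_in A Y"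
  unfolding edges_in_def by blast

lemma edges_in_disjoint: "X \<inter> Y = {} \<Longrightarrow> edges_in A X \<inter> edges_in A Y = {}"
  unfolding edges_in_def by (auto simp: doubleton_eq_iff)

section \<open>A component of the neighbourhood \<open>W\<^sub>0\<close> of \<open>V\<^sub>D'\<close>\<close>

locale VD_component =
  fixes V :: "'a set" and Adj :: "'a \<Rightarrow> 'a \<Rightarrow> bool" and VD :: "'a set" and a :: nat
    and S :: "'a set"
  assumes simple: "simple_graph V Adj"
    and a_pos: "0 < a"
    and VD_subset: "VD \<subseteq> V"
    and component: "S \<in> components_in Adj {u \<in> V. gdist_set V Adj u VD \<le> enat a}"
begin

abbreviation W0 :: "'a set" where "W0 \<equiv> {u \<in> V. gdist_set V Adj u VD \<le> enat a}"

abbreviation gd :: "'a \<Rightarrow> 'a \<Rightarrow> enat" where "gd \<equiv> gdist V Adj"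

lemma Adj_sym: "Adj x y \<Longrightarrow> Adj y x"
  using simple unfolding simple_graph_def by blast

lemma Adj_in_V: "Adj x y \<Longrightarrow> x \<in> V \<and> y \<in> V"
  using simple unfolding simple_graph_def by blast

lemma finite_V: "finite V"
  using simple unfolding simple_graph_def by blast

lemma gdist_sym: "gd u v \<le> enat n \<Longrightarrow> gd v u \<le> enat n"
  unfolding gdist_def using dist_in_sym[of Adj, OF Adj_sym] .

lemma gdist_triangle: "gd u v \<le> enat n \<Longrightarrow> gd v w \<le> enat m \<Longrightarrow> gd u w \<le> enat (n + m)"
  unfolding gdist_def by (rule dist_in_triangle)

lemma gdist_refl: "u \<in> V \<Longrightarrow> gd u u \<le> enat n"
  unfolding gdist_def by (rule le_enat_trans[OF dist_in_refl]) simp_all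

lemma gdist_adj: "Adj u v \<Longrightarrow> gd u v \<le> enat 1"
  unfolding gdist_def by (metis Adj_in_V dist_in_adj)

lemma gdist_memD: "gd u v \<le> enat n \<Longrightarrow> u \<in> V \<and> v \<in> V"
  unfolding gdist_def by (rule dist_in_memD)

lemma gdist_le_dist_in: "X \<subseteq> V \<Longrightarrow> dist_in Adj X u v \<le> enat n \<Longrightarrow> gd u v \<le> enat n"
  unfolding gdist_def by (rule dist_in_mono_set)

lemma mem_W0_iff: "u \<in> W0 \<longleftrightarrow> u \<in> V \<and> (\<exists>w\<in>VD. gd u w \<le> enat a)"
  unfolding gdist_set_def Inf_enat_le_iff by auto

lemma walk_in_W0:
  assumes "walk_in Adj V xs" "\<And>i. i < length xs \<Longrightarrow> \<exists>w\<in>VD. gd (xs ! i) w \<le> enat a"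
  shows "walk_in Adj W0 xs"
proof -
  have "set xs \<subseteq> W0"
  proof
    fix y assume "y \<in> set xs"
    then obtain i where "i < length xs" "y = xs ! i" by (metis in_set_conv_nth)
    then show "y \<in> W0" using assms(2) gdist_memD unfolding mem_W0_iff by blast
  qed
  then show ?thesis using assms(1) unfolding walk_in_def by blast
qed

lemma dist_in_W0_from_VD:
  assumes "w \<in> VD" "gd w x \<le> enat a"
  shows "dist_in Adj W0 w x \<le> enat a"
proof -
  obtain xs where xs: "walk_in Adj V xs" "hd xs = w" "last xs = x" "length xs \<le> Suc a"
    using assms(2) dist_in_le_enat_iff unfolding gdist_def by metis
  have "gd (xs ! i) w \<le> enat a" if "i < length xs" for i
  proof -
    have "gd w (xs ! i) \<le> enat i"
      using walk_in_dist_from_hd[OF xs(1) that] xs(2) unfolding gdist_def by simp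
    then show ?thesis using that xs(4) by (auto intro: le_enat_trans dest: gdist_sym)
  qed
  then have "walk_in Adj W0 xs" using walk_in_W0[OF xs(1)] assms(1) by blast
  then show ?thesis unfolding dist_in_le_enat_iff using xs by blast
qed

text \<open>Each vertex of a shortest walk is within \<open>a\<close> of one of its two ends.\<close>

lemma dist_in_W0_between_VD:
  assumes "w \<in> VD" "w' \<in> VD" "gd w w' \<le> enat (2 * a + 1)"
  shows "dist_in Adj W0 w w' \<le> enat (2 * a + 1)"
proof -
  obtain xs where xs: "walk_in Adj V xs" "hd xs = w" "last xs = w'" "length xs \<le> Suc (2 * a + 1)"
    using assms(3) dist_in_le_enat_iff unfolding gdist_def by metis
  have "\<exists>u\<in>VD. gd (xs ! i) u \<le> enat a" if i: "i < length xs" for i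
  proof (cases "i \<le> a")
    case True
    have "gd w (xs ! i) \<le> enat i"
      using walk_in_dist_from_hd[OF xs(1) i] xs(2) unfolding gdist_def by simp
    then have "gd (xs ! i) w \<le> enat a" using True by (auto intro: le_enat_trans dest: gdist_sym)
    then show ?thesis using assms(1) by blast
  next
    case False
    have "gd (xs ! i) w' \<le> enat (length xs - 1 - i)"
      using walk_in_dist_to_last[OF xs(1) i] xs(3) unfolding gdist_def by simp
    moreover have "length xs - 1 - i \<le> a" using False xs(4) by linarith
    ultimately have "gd (xs ! i) w' \<le> enat a" by (rule le_enat_trans)
    then show ?thesis using assms(2) by blast
  qed
  then have "walk_in Adj W0 xs" using walk_in_W0[OF xs(1)] by blast
  then show ?thesis unfolding dist_in_le_enat_iff using xs by auto
qed

lemma S_subset_W0: "S \<subseteq> W0"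
  using component by (rule component_subset)

lemma S_subset_V: "S \<subseteq> V"
  using S_subset_W0 by blast

lemma VD_anchor:
  assumes "x \<in> S"
  shows "\<exists>w\<in>VD \<inter> S. dist_in Adj S w x \<le> enat a"
proof -
  obtain w where w: "w \<in> VD" "gd x w \<le> enat a"
    using assms S_subset_W0 mem_W0_iff by blast
  have "dist_in Adj W0 w x \<le> enat a" using dist_in_W0_from_VD[OF w(1) gdist_sym[OF w(2)]] .
  moreover have "w \<in> S"
    using component_closed[OF component assms dist_in_sym[of Adj, OF Adj_sym calculation]] .
  ultimately show ?thesis using w(1) component_dist_in[OF component] by blast
qed

lemma VD_ball_subset_or_disjoint:
  assumes "u \<in> VD"
  shows "ball_r V Adj a u \<subseteq> S \<or> ball_r V Adj a u \<inter> S = {}"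
proof (rule disjCI)
  assume "ball_r V Adj a u \<inter> S \<noteq> {}"
  then obtain z where z: "z \<in> S" "gd z u \<le> enat a" unfolding ball_r_def by auto
  have "dist_in Adj W0 z u \<le> enat a"
    using dist_in_sym[of Adj, OF Adj_sym dist_in_W0_from_VD[OF assms gdist_sym[OF z(2)]]] .
  then have "u \<in> S" using component_closed[OF component z(1)] by blast
  show "ball_r V Adj a u \<subseteq> S"
  proof
    fix y assume "y \<in> ball_r V Adj a u"
    then have "gd u y \<le> enat a" unfolding ball_r_def by (auto intro: gdist_sym)
    then show "y \<in> S"
      using component_closed[OF component \<open>u \<in> S\<close> dist_in_W0_from_VD[OF assms]] by blast
  qed
qed

lemma dist_in_S_between_VD:
  assumes "w \<in> VD \<inter> S" "w' \<in> VD" "gd w w' \<le> enat (2 * a + 1)"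
  shows "dist_in Adj S w w' \<le> enat (2 * a + 1)"
  using component_dist_in[OF component _ dist_in_W0_between_VD] assms by blast

definition separated :: "'a set \<Rightarrow> bool" where
  "separated Y \<longleftrightarrow> (\<forall>u\<in>Y. \<forall>v\<in>Y. u \<noteq> v \<longrightarrow> enat (2 * a) < gd u v)"

abbreviation NS :: nat where "NS \<equiv> NX V Adj VD a S"

lemma ex_maximum_separated:
  assumes "finite Z"
  obtains Y where "Y \<subseteq> Z" "separated Y"
    and "\<And>Y'. Y' \<subseteq> Z \<Longrightarrow> separated Y' \<Longrightarrow> card Y' \<le> card Y"
proof -
  let ?C = "{card Y | Y. Y \<subseteq> Z \<and> separated Y}"
  have "?C \<subseteq> {..card Z}" using assms card_mono by fastforce
  then have "finite ?C" by (rule finite_subset) simp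
  moreover have "card {} \<in> ?C" by (intro CollectI exI[of _ "{}"]) (simp add: separated_def)
  ultimately have "Max ?C \<in> ?C" by (intro Max_in) auto
  then obtain Y where "Y \<subseteq> Z" "separated Y" "card Y = Max ?C" by auto
  moreover have "card Y' \<le> Max ?C" if "Y' \<subseteq> Z" "separated Y'" for Y'
    using \<open>finite ?C\<close> that by (intro Max_ge) auto
  ultimately show thesis using that by metis
qed

lemma NS_attained:
  obtains Y where "Y \<subseteq> S \<inter> VD" "separated Y" "card Y = NS"
    and "\<And>Y'. Y' \<subseteq> S \<inter> VD \<Longrightarrow> separated Y' \<Longrightarrow> card Y' \<le> NS"
proof -
  have "finite (S \<inter> VD)" using finite_V S_subset_V finite_subset by blast
  then obtain Y where Y: "Y \<subseteq> S \<inter> VD" "separated Y"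
    and max: "\<And>Y'. Y' \<subseteq> S \<inter> VD \<Longrightarrow> separated Y' \<Longrightarrow> card Y' \<le> card Y"
    using ex_maximum_separated by blast
  let ?C = "{card Y' | Y'. Y' \<subseteq> S \<inter> VD \<and> separated Y'}"
  have "?C \<subseteq> {..card Y}" using max by auto
  then have "finite ?C" by (rule finite_subset) simp
  then have "NS = card Y"
    unfolding NX_def separated_def[symmetric] using Y max by (intro Max_eqI) auto
  with Y max that show thesis by metis
qed

lemma card_separated_le_NS: "Y \<subseteq> S \<inter> VD \<Longrightarrow> separated Y \<Longrightarrow> card Y \<le> NS"
  by (metis NS_attained)

lemma NS_pos: "1 \<le> NS"
proof -
  obtain w where "w \<in> VD \<inter> S"
    using VD_anchor component_nonempty[OF component] by blast
  then have "card {w} \<le> NS" by (intro card_separated_le_NS) (auto simp: separated_def)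
  then show ?thesis by simp
qed

lemma maximum_separated_dominates:
  assumes "finite Z" "Z \<subseteq> V" "Y \<subseteq> Z" "separated Y"
    and max: "\<And>Y'. Y' \<subseteq> Z \<Longrightarrow> separated Y' \<Longrightarrow> card Y' \<le> card Y"
    and "u \<in> Z"
  shows "\<exists>y\<in>Y. gd u y \<le> enat (2 * a)"
proof (rule ccontr)
  assume far: "\<not> ?thesis"
  then have "u \<notin> Y" using assms(2,6) gdist_refl by blast
  have "separated (insert u Y)"
    using assms(4) far gdist_sym unfolding separated_def by (metis insert_iff not_le)
  then have "card (insert u Y) \<le> card Y" using assms(3,6) max by blast
  moreover have "finite Y" using assms(1,3) finite_subset by blast
  ultimately show False using \<open>u \<notin> Y\<close> by simp
qed

section \<open>The diameter bound\<close>

abbreviation hop :: "'a \<Rightarrow> 'a \<Rightarrow> bool" where "hop u v \<equiv> gd u v \<le> enat (2 * a + 1)"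

lemma far_if_not_hop: "\<not> hop u v \<Longrightarrow> enat (2 * a) < gd u v"
  by (meson le_less_trans enat_ord_simps(1) le_add1 not_le)

lemma far_sym: "enat n < gd u v \<Longrightarrow> enat n < gd v u"
  using gdist_sym not_le by blast

lemma hop_walk_exists:
  assumes "w \<in> VD \<inter> S" "w' \<in> VD \<inter> S"
  shows "\<exists>us. walk_in hop (VD \<inter> S) us \<and> hd us = w \<and> last us = w'"
proof -
  have "\<forall>x\<in>S. \<exists>u. u \<in> VD \<inter> S \<and> gd x u \<le> enat a"
    using VD_anchor gdist_le_dist_in[OF S_subset_V] gdist_sym by meson
  then obtain f where f: "\<And>x. x \<in> S \<Longrightarrow> f x \<in> VD \<inter> S \<and> gd x (f x) \<le> enat a" by metis
  define g where "g x = (if x \<in> VD then x else f x)" for x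
  have g: "g x \<in> VD \<inter> S" "gd x (g x) \<le> enat a" if "x \<in> S" for x
    using f[OF that] that S_subset_V gdist_refl unfolding g_def by auto
  obtain n where "dist_in Adj S w w' \<le> enat n"
    using component_connected[OF Adj_sym component] assms by blast
  then obtain xs where xs: "walk_in Adj S xs" "hd xs = w" "last xs = w'"
    using dist_in_le_enat_iff by metis
  have "hop (g x) (g y)" if "x \<in> set xs" "y \<in> set xs" "Adj x y" for x y
  proof -
    have "x \<in> S" "y \<in> S" using that(1,2) xs(1) unfolding walk_in_def by auto
    then have "gd (g x) y \<le> enat (a + 1)"
      using gdist_triangle[OF gdist_sym gdist_adj[OF that(3)]] g(2) by blast
    from gdist_triangle[OF this g(2)[OF \<open>y \<in> S\<close>]] show ?thesis by (simp add: mult_2)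
  qed
  then have "successively hop (map g xs)"
    using xs(1) unfolding walk_in_iff_successively successively_map
    by (blast intro: successively_mono)
  moreover have "set (map g xs) \<subseteq> VD \<inter> S" using xs(1) g unfolding walk_in_def by auto
  moreover have "g w = w" "g w' = w'" using assms unfolding g_def by auto
  ultimately show ?thesis using xs unfolding walk_in_iff_successively
    by (intro exI[of _ "map g xs"]) (auto simp: hd_map last_map)
qed

lemma separated_even_positions:
  assumes "set us \<subseteq> V"
    and no_hop: "\<And>i j. Suc i < j \<Longrightarrow> j < length us \<Longrightarrow> \<not> hop (us ! i) (us ! j)"
  defines "E \<equiv> (\<lambda>i. us ! (2 * i)) ` {i. 2 * i < length us}"
  shows "separated E" "card E = (length us + 1) div 2"
proof -
  have far: "enat (2 * a) < gd (us ! (2 * i)) (us ! (2 * j))"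
    if "i \<noteq> j" "2 * i < length us" "2 * j < length us" for i j
  proof (cases "i < j")
    case True
    then show ?thesis using no_hop that far_if_not_hop by simp
  next
    case False
    then show ?thesis using no_hop that far_if_not_hop far_sym by simp
  qed
  show "separated E" unfolding separated_def E_def
  proof (intro ballI impI)
    fix x y assume "x \<in> (\<lambda>i. us ! (2 * i)) ` {i. 2 * i < length us}"
      and "y \<in> (\<lambda>i. us ! (2 * i)) ` {i. 2 * i < length us}" and "x \<noteq> y"
    then obtain i j where "x = us ! (2 * i)" "y = us ! (2 * j)" "i \<noteq> j"
      and "2 * i < length us" "2 * j < length us" by auto
    then show "enat (2 * a) < gd x y" using far by simp
  qed
  have "us ! (2 * i) \<noteq> us ! (2 * j)"
    if "i \<noteq> j" "2 * i < length us" "2 * j < length us" for i j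
  proof
    assume eq: "us ! (2 * i) = us ! (2 * j)"
    have "us ! (2 * i) \<in> V" using assms(1) that(2) by (meson nth_mem subsetD)
    then have "gd (us ! (2 * i)) (us ! (2 * j)) \<le> enat (2 * a)" using eq gdist_refl by simp
    then show False using far[OF that] by simp
  qed
  then have "inj_on (\<lambda>i. us ! (2 * i)) {i. 2 * i < length us}"
    unfolding inj_on_def by blast
  moreover have "{i. 2 * i < length us} = {..<(length us + 1) div 2}" by auto
  ultimately show "card E = (length us + 1) div 2" unfolding E_def by (simp add: card_image)
qed

lemma short_hop_walk:
  assumes "w \<in> VD \<inter> S" "w' \<in> VD \<inter> S"
  shows "\<exists>us. walk_in hop (VD \<inter> S) us \<and> hd us = w \<and> last us = w' \<and> length us \<le> 2 * NS"
proof -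
  let ?walk = "\<lambda>us. walk_in hop (VD \<inter> S) us \<and> hd us = w \<and> last us = w'"
  obtain us where us: "?walk us" and shortest: "\<And>vs. ?walk vs \<Longrightarrow> length us \<le> length vs"
    using ex_has_least_nat[of ?walk _ length] hop_walk_exists[OF assms] by metis
  let ?E = "(\<lambda>i. us ! (2 * i)) ` {i. 2 * i < length us}"
  have "\<not> hop (us ! i) (us ! j)" if "Suc i < j" "j < length us" for i j
    using shortest_walk_no_shortcut[of hop "VD \<inter> S" us i j] us shortest that by blast
  moreover have set_us: "set us \<subseteq> VD \<inter> S" using us unfolding walk_in_def by blast
  ultimately have "separated ?E" "card ?E = (length us + 1) div 2"
    using separated_even_positions[of us] VD_subset by blast+
  moreover have "?E \<subseteq> S \<inter> VD" using set_us by auto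
  ultimately have "(length us + 1) div 2 \<le> NS" using card_separated_le_NS by metis
  then show ?thesis using us by (intro exI[of _ us]) auto
qed

lemma dist_in_S_le_NS:
  assumes "x \<in> S" "y \<in> S"
  shows "dist_in Adj S x y \<le> enat (2 * a + (2 * NS - 1) * (2 * a + 1))"
proof -
  obtain w w' where w: "w \<in> VD \<inter> S" "dist_in Adj S w x \<le> enat a"
    and w': "w' \<in> VD \<inter> S" "dist_in Adj S w' y \<le> enat a"
    using VD_anchor assms by meson
  obtain us where us: "walk_in hop (VD \<inter> S) us" "hd us = w" "last us = w'" "length us \<le> 2 * NS"
    using short_hop_walk[OF w(1) w'(1)] by blast
  have hop_dist: "dist_in Adj S u v \<le> enat (2 * a + 1)" if "u \<in> VD \<inter> S" "v \<in> VD \<inter> S" "hop u v" for u v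
    using dist_in_S_between_VD that by blast
  have "dist_in Adj S w w' \<le> enat ((length us - 1) * (2 * a + 1))"
    using walk_in_dist_le_hops[OF us(1) _ hop_dist] us(2,3) by blast
  moreover have "(length us - 1) * (2 * a + 1) \<le> (2 * NS - 1) * (2 * a + 1)"
    using us(4) by (intro mult_le_mono1) linarith
  ultimately have "dist_in Adj S w w' \<le> enat ((2 * NS - 1) * (2 * a + 1))"
    by (rule le_enat_trans)
  moreover have "dist_in Adj S x w \<le> enat a" using dist_in_sym[of Adj, OF Adj_sym w(2)] .
  ultimately have "dist_in Adj S x y \<le> enat (a + (2 * NS - 1) * (2 * a + 1) + a)"
    using dist_in_triangle[OF dist_in_triangle w'(2)] by blast
  then show ?thesis by (rule le_enat_trans) simp
qed

lemma diameter_S_bound: "\<exists>d. DX Adj S = enat d \<and> int d \<le> 10 * int a * int NS - (4 * int a + 1)"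
proof -
  let ?B = "2 * a + (2 * NS - 1) * (2 * a + 1)"
  have "DX Adj S \<le> enat ?B"
    unfolding DX_def using dist_in_S_le_NS by (auto intro: SUP_least)
  then obtain d where d: "DX Adj S = enat d" "d \<le> ?B"
    using enat_ile by fastforce
  have "int (2 * NS - 1) = 2 * int NS - 1" using NS_pos by (simp add: of_nat_diff)
  moreover have "int ?B = 2 * int a + int (2 * NS - 1) * (2 * int a + 1)"
    by (simp only: of_nat_add of_nat_mult of_nat_1 of_nat_numeral)
  ultimately have "int ?B = 2 * int a + (2 * int NS - 1) * (2 * int a + 1)" by simp
  moreover have "0 \<le> (int NS - 1) * (3 * int a - 1)" using NS_pos a_pos by simp
  ultimately have "int ?B \<le> 10 * int a * int NS - (4 * int a + 1)"
    using a_pos by (simp add: algebra_simps)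
  moreover have "int d \<le> int ?B" using d(2) by (simp only: of_nat_le_iff)
  ultimately show ?thesis using d(1) by (meson order_trans)
qed

section \<open>The bound \<open>N\<^sub>S \<le> 2b\<close>\<close>

abbreviation ball_edges :: "'a \<Rightarrow> nat" where
  "ball_edges u \<equiv> card (edges_in Adj (ball_r V Adj a u))"

lemma finite_edges_in_ball: "finite (edges_in Adj (ball_r V Adj r u))"
proof -
  have "edges_in Adj (ball_r V Adj r u) \<subseteq> Pow V" unfolding edges_in_def ball_r_def by auto
  then show ?thesis using finite_V by (meson finite_Pow_iff finite_subset)
qed

lemma component_eq_singleton_if_no_ball_edges:
  assumes "v \<in> S" "ball_edges v = 0"
  shows "S = {v}"
proof -
  have "v \<in> V" using assms(1) S_subset_V by blast
  have no_adj: "\<not> Adj v u" for u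
  proof
    assume "Adj v u"
    then have "gd u v \<le> enat 1" using Adj_sym gdist_adj by blast
    then have "gd u v \<le> enat a" using a_pos le_enat_trans by simp
    then have "u \<in> ball_r V Adj a v" "v \<in> ball_r V Adj a v"
      using \<open>v \<in> V\<close> gdist_refl gdist_memD unfolding ball_r_def by blast+
    then have "{v, u} \<in> edges_in Adj (ball_r V Adj a v)"
      using \<open>Adj v u\<close> unfolding edges_in_def by blast
    then show False using assms(2) finite_edges_in_ball by (simp add: card_eq_0_iff)
  qed
  have "y = v" if y: "y \<in> S" for y
  proof -
    obtain n where "dist_in Adj S v y \<le> enat n"
      using component_connected[OF Adj_sym component assms(1) y] by blast
    then obtain xs where xs: "walk_in Adj S xs" "hd xs = v" "last xs = y"
      using dist_in_le_enat_iff by metis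
    then obtain ys where "xs = v # ys" unfolding walk_in_def by (cases xs) auto
    with xs(1) no_adj have "ys = []"
      unfolding walk_in_iff_successively by (cases ys) (auto simp: successively_Cons)
    with xs \<open>xs = v # ys\<close> show "y = v" by simp
  qed
  then show ?thesis using assms(1) by blast
qed

lemma separated_balls_disjoint:
  assumes "separated Y" "y \<in> Y" "y' \<in> Y" "y \<noteq> y'"
  shows "ball_r V Adj a y \<inter> ball_r V Adj a y' = {}"
proof (rule ccontr)
  assume "ball_r V Adj a y \<inter> ball_r V Adj a y' \<noteq> {}"
  then obtain q where "gd q y \<le> enat a" "gd q y' \<le> enat a" unfolding ball_r_def by blast
  then have "gd y y' \<le> enat (a + a)" using gdist_triangle[OF gdist_sym] by blast
  then show False using assms unfolding separated_def by (simp add: mult_2 not_le[symmetric])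
qed

lemma sum_ball_edges_separated_le:
  assumes "separated Y" "Y \<subseteq> ball_r V Adj R v"
  shows "(\<Sum>y\<in>Y. ball_edges y) \<le> card (edges_in Adj (ball_r V Adj (R + a) v))"
proof -
  have "finite Y" using assms(2) finite_V unfolding ball_r_def by (auto intro: finite_subset)
  have "ball_r V Adj a y \<subseteq> ball_r V Adj (R + a) v" if "y \<in> Y" for y
    using assms(2) that gdist_triangle unfolding ball_r_def by (fastforce simp: add.commute)
  then have sub: "(\<Union>y\<in>Y. edges_in Adj (ball_r V Adj a y)) \<subseteq> edges_in Adj (ball_r V Adj (R + a) v)"
    using edges_in_mono by blast
  have "\<forall>y\<in>Y. \<forall>y'\<in>Y. y \<noteq> y' \<longrightarrow>
      edges_in Adj (ball_r V Adj a y) \<inter> edges_in Adj (ball_r V Adj a y') = {}"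
    by (intro ballI impI edges_in_disjoint separated_balls_disjoint[OF assms(1)])
  then have "(\<Sum>y\<in>Y. ball_edges y) = card (\<Union>y\<in>Y. edges_in Adj (ball_r V Adj a y))"
    using \<open>finite Y\<close> finite_edges_in_ball by (intro card_UN_disjoint[symmetric]) auto
  also have "\<dots> \<le> card (edges_in Adj (ball_r V Adj (R + a) v))"
    using sub finite_edges_in_ball by (rule card_mono[rotated])
  finally show ?thesis .
qed

lemma card_separated_in_sparse_ball_le:
  assumes "card (edges_in Adj (ball_r V Adj (R + a) v)) \<le> c * ball_edges v" "0 < ball_edges v"
    and "separated Y" "Y \<subseteq> ball_r V Adj R v" "\<And>y. y \<in> Y \<Longrightarrow> ball_edges v \<le> ball_edges y"
  shows "card Y \<le> c"
proof -
  have "card Y * ball_edges v \<le> (\<Sum>y\<in>Y. ball_edges y)"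
    using assms(5) sum_mono[of Y "\<lambda>_. ball_edges v" ball_edges] by simp
  also have "\<dots> \<le> c * ball_edges v"
    using sum_ball_edges_separated_le[OF assms(3,4)] assms(1) by linarith
  finally show ?thesis using assms(2) by simp
qed

text \<open>For \<open>x\<close> unreachable from \<open>v\<close> the \<open>LEAST\<close> is a junk value; \<open>level\<close> is only used
  for \<open>v, x \<in> S\<close>.\<close>

definition level :: "'a \<Rightarrow> 'a \<Rightarrow> nat" where
  "level v x = (LEAST n. gd v x \<le> enat n)"

lemma level_le: "gd v x \<le> enat n \<Longrightarrow> level v x \<le> n"
  unfolding level_def by (rule Least_le)

lemma gdist_le_level:
  assumes "v \<in> S" "x \<in> S"
  shows "gd v x \<le> enat (level v x)"
proof -
  obtain n where "dist_in Adj S v x \<le> enat n"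
    using component_connected[OF Adj_sym component assms] by blast
  then have "gd v x \<le> enat n" using gdist_le_dist_in S_subset_V by blast
  then show ?thesis unfolding level_def by (rule LeastI)
qed

lemma component_level_ivt:
  assumes "v \<in> S" "t \<in> S" "d \<le> level v t"
  shows "\<exists>x\<in>S. level v x = d"
proof -
  obtain n where "dist_in Adj S v t \<le> enat n"
    using component_connected[OF Adj_sym component assms(1,2)] by blast
  then obtain xs where xs: "walk_in Adj S xs" "hd xs = v" "last xs = t"
    using dist_in_le_enat_iff by metis
  have "level v y \<le> level v x + 1" if "x \<in> S" "Adj x y" for x y
    using gdist_triangle[OF gdist_le_level[OF assms(1) that(1)] gdist_adj[OF that(2)]] level_le
    by blast
  then have "successively (\<lambda>x y. level v y \<le> level v x + 1) xs"
    using xs(1) unfolding walk_in_iff_successively by (blast intro: successively_mono)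
  moreover have "level v v = 0" using level_le[OF gdist_refl] assms(1) S_subset_V by blast
  ultimately have "\<exists>x\<in>set xs. level v x = d"
    using xs assms(3) by (intro successively_le_Suc_ivt) (auto simp: walk_in_def)
  then show ?thesis using xs(1) unfolding walk_in_def by blast
qed

lemma card_dominating_set_ge:
  assumes "v \<in> S" "t \<in> S" "\<not> gd v t \<le> enat R" "a \<le> R" "Y \<subseteq> S" "finite Y"
    and dom: "\<And>u. u \<in> VD \<inter> S \<Longrightarrow> gd u v \<le> enat R \<Longrightarrow> \<exists>y\<in>Y. gd u y \<le> enat (2 * a)"
  shows "R - a + 1 \<le> card Y * (2 * (3 * a) + 1)"
proof (rule card_le_of_interval_cover[OF assms(6)], rule subsetI)
  fix d assume "d \<in> {0..R - a}"
  then have "d \<le> R - a" by simp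
  moreover have "R < level v t"
    using assms(3) gdist_le_level[OF assms(1,2)] le_enat_trans not_le by blast
  ultimately have "d \<le> level v t" by linarith
  then obtain x where x: "x \<in> S" "level v x = d"
    using component_level_ivt[OF assms(1,2)] by blast
  obtain u where u: "u \<in> VD \<inter> S" "gd x u \<le> enat a"
    using VD_anchor[OF x(1)] gdist_le_dist_in[OF S_subset_V] gdist_sym by blast
  have vx: "gd v x \<le> enat d" using gdist_le_level[OF assms(1) x(1)] x(2) by simp
  have "d + a \<le> R" using \<open>d \<le> R - a\<close> assms(4) by linarith
  then have "gd u v \<le> enat R"
    using gdist_sym[OF gdist_triangle[OF vx u(2)]] le_enat_trans by blast
  then obtain y where y: "y \<in> Y" "gd u y \<le> enat (2 * a)" using dom u(1) by blast
  have xy: "gd x y \<le> enat (3 * a)" using gdist_triangle[OF u(2) y(2)] by simp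
  have "level v y \<le> d + 3 * a" using gdist_triangle[OF vx xy] level_le by blast
  moreover have "d \<le> level v y + 3 * a"
    using gdist_triangle[OF gdist_le_level[OF assms(1)] gdist_sym[OF xy]] y(1) assms(5) x(2) level_le
    by blast
  ultimately show "d \<in> (\<Union>y\<in>Y. {level v y - 3 * a .. level v y + 3 * a})" using y(1) by force
qed

lemma NS_le_card_S: "NS \<le> card S"
proof -
  obtain Y where "Y \<subseteq> S \<inter> VD" "card Y = NS"
    by (metis NS_attained)
  moreover have "finite S" using S_subset_V finite_V finite_subset by blast
  ultimately show ?thesis using card_mono[of S Y] by simp
qed

text \<open>A maximum separated \<open>Y'\<close> in the \<open>R\<close>-ball around \<open>v\<close> packs disjoint \<open>a\<close>-balls, so it
  is small by sparsity; but it also dominates that ball, so a vertex of a large separated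
  set outside the ball would force \<open>Y'\<close> to be large.\<close>

lemma NS_le_around_sparse_minimiser:
  assumes v: "v \<in> VD \<inter> S" and v_min: "\<And>u. u \<in> VD \<inter> S \<Longrightarrow> ball_edges v \<le> ball_edges u"
    and "0 < ball_edges v" "a \<le> R"
    and sparse: "card (edges_in Adj (ball_r V Adj (R + a) v)) \<le> c * ball_edges v"
    and "c * (2 * (3 * a) + 1) < R - a + 1"
  shows "NS \<le> c"
proof (rule ccontr)
  assume "\<not> NS \<le> c"
  obtain Y where Y: "Y \<subseteq> S \<inter> VD" "separated Y" "card Y = NS"
    by (metis NS_attained)
  define Z where "Z = {z \<in> VD \<inter> S. gd z v \<le> enat R}"
  have "Z \<subseteq> V" unfolding Z_def using VD_subset by blast
  then have Z: "finite Z" "Z \<subseteq> V" using finite_V finite_subset by blast+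
  then obtain Y' where Y': "Y' \<subseteq> Z" "separated Y'"
    and Y'_max: "\<And>Y''. Y'' \<subseteq> Z \<Longrightarrow> separated Y'' \<Longrightarrow> card Y'' \<le> card Y'"
    using ex_maximum_separated by blast
  have "Y' \<subseteq> ball_r V Adj R v" using Y'(1) Z(2) unfolding Z_def ball_r_def by blast
  moreover have "\<And>y. y \<in> Y' \<Longrightarrow> ball_edges v \<le> ball_edges y"
    using Y'(1) v_min unfolding Z_def by blast
  ultimately have "card Y' \<le> c"
    using card_separated_in_sparse_ball_le sparse \<open>0 < ball_edges v\<close> Y'(2) by blast
  have "\<not> Y \<subseteq> Z"
  proof
    assume "Y \<subseteq> Z"
    then have "card Y \<le> card Y'" using Y'_max Y(2) by blast
    then show False using \<open>card Y' \<le> c\<close> \<open>\<not> NS \<le> c\<close> Y(3) by linarith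
  qed
  then obtain t where "t \<in> Y" "t \<notin> Z" by blast
  then have "t \<in> S" "\<not> gd v t \<le> enat R" using Y(1) gdist_sym unfolding Z_def by blast+
  moreover have "Y' \<subseteq> S" "finite Y'" using Y'(1) Z(1) finite_subset unfolding Z_def by blast+
  moreover have "\<And>u. u \<in> VD \<inter> S \<Longrightarrow> gd u v \<le> enat R \<Longrightarrow> \<exists>y\<in>Y'. gd u y \<le> enat (2 * a)"
    using maximum_separated_dominates[OF Z Y'(1,2) Y'_max] unfolding Z_def by blast
  ultimately have "R - a + 1 \<le> card Y' * (2 * (3 * a) + 1)"
    using card_dominating_set_ge[of v t R Y'] v \<open>a \<le> R\<close> by blast
  also have "\<dots> \<le> c * (2 * (3 * a) + 1)"
    using \<open>card Y' \<le> c\<close> by (rule mult_le_mono1)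
  finally show False using assms(6) by linarith
qed

lemma NS_le:
  assumes "0 < b"
    and dense: "\<forall>v\<in>VD. real (card (edges_in Adj (ball_r V Adj a v)))
                 \<ge> real (card (edges_in Adj (ball_r V Adj (100 * a * b) v))) / (2 * real b)"
  shows "NS \<le> 2 * b"
proof -
  obtain w where "w \<in> VD \<inter> S" using VD_anchor component_nonempty[OF component] by blast
  then obtain v where v: "v \<in> VD \<inter> S"
    and v_min: "\<And>u. u \<in> VD \<inter> S \<Longrightarrow> ball_edges v \<le> ball_edges u"
    using ex_has_least_nat[of "\<lambda>u. u \<in> VD \<inter> S" w ball_edges] by blast
  show ?thesis
  proof (cases "ball_edges v = 0")
    case True
    then have "S = {v}" using component_eq_singleton_if_no_ball_edges v by blast
    then show ?thesis using NS_le_card_S assms(1) by simp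
  next
    case False
    have ab: "a \<le> a * b" "b \<le> a * b" using a_pos assms(1) by simp_all
    define R where "R = 100 * a * b - a"
    have R: "a \<le> R" "R + a = 100 * a * b" unfolding R_def mult.assoc using ab by linarith+
    have "real (card (edges_in Adj (ball_r V Adj (R + a) v))) \<le> 2 * real b * real (ball_edges v)"
      using dense v assms(1) R(2) by (simp add: divide_le_eq mult.commute)
    then have "real (card (edges_in Adj (ball_r V Adj (R + a) v))) \<le> real (2 * b * ball_edges v)"
      by simp
    then have sparse: "card (edges_in Adj (ball_r V Adj (R + a) v)) \<le> 2 * b * ball_edges v"
      by (simp only: of_nat_le_iff)
    have "2 * b * (2 * (3 * a) + 1) = 12 * (a * b) + 2 * b" by (simp add: algebra_simps)
    then have "2 * b * (2 * (3 * a) + 1) < R - a + 1"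
      using ab unfolding R_def mult.assoc by linarith
    moreover have "0 < ball_edges v" using False by simp
    ultimately show ?thesis using NS_le_around_sparse_minimiser[OF v v_min _ R(1) sparse] by blast
  qed
qed

end

theorem lemmaB8:
  fixes V :: "'a set" and Adj :: "'a \<Rightarrow> 'a \<Rightarrow> bool" and VD :: "'a set" and a b :: nat
  assumes "simple_graph V Adj"
    and "a > 0" and "b > 0"
    and "VD \<subseteq> V"
    and "\<forall>v\<in>VD. real (card (edges_in Adj (ball_r V Adj a v)))
                 \<ge> real (card (edges_in Adj (ball_r V Adj (100 * a * b) v))) / (2 * real b)"
    and "W0 = {u \<in> V. gdist_set V Adj u VD \<le> enat a}"
    and "S \<in> components_in Adj W0"
  shows "inv_H V Adj VD a b S"
proof -
  interpret VD_component V Adj VD a S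
    using assms(1,2,4,7) unfolding assms(6) by unfold_locales
  show ?thesis unfolding inv_H_def
    using VD_ball_subset_or_disjoint diameter_S_bound NS_le[OF assms(3,5)] by blast
qed

end
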